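(* Let $\Delta,\Gamma\in\mathbb{R}$ with $2+3\Delta\Gamma\neq 0$, define $$\sigma:=3\Gamma(1+\Delta\Gamma),\qquad s_1^2:=\Gamma\,\frac{2+3\Delta\Gamma}{1+\Delta\Gamma+(1-\Delta)(1+3\Delta\Gamma+3\Delta^2\Gamma^2)},$$ and assume that the denominator is nonzero and $s_1^2>0$ (this holds in particular whenever $0\le\Delta\le1$ and $\Gamma>0$). For a unit vector $\mathbf{k}\in S^2$, define the linear map $P(\mathbf{k})$ on state vectors $V=(K_{ab},N_{ab},a_b)\in\mathbb{R}^{9}\times\mathbb{R}^9\times\mathbb{R}^3$ by $P(\mathbf{k})V=(\tilde K_{ab},\tilde N_{ab},\tilde a_b)$ with $$\tilde K_{ab}=\varepsilon_a{}^{cd}k_cN_{db}+k_aa_b-\frac{\Delta}{2+3\Delta\Gamma}\delta_{ab}\Big[(\Gamma-\sigma)\varepsilon^{fcd}k_fN_{cd}+(1+\Gamma+\Delta\sigma)k^ca_c\Big],$$ $$\tilde N_{ab}=-\varepsilon_a{}^{cd}k_cK_{db}+\Delta\Gamma\,\varepsilon_{ab}{}^ck_cK,\qquad \tilde a_b=s_1^2k^aK_{ab}+\big[\Gamma-s_1^2(1+\Delta\Gamma)\big]k_bK.$$ Let $H$ be the ($\mathbf{k}$-independent) symmetric positive-definite matrix defined by $V^THV:=K^{ab}K_{ab}+N^{ab}N_{ab}+s_1^{-2}a^ba_b$. Then $V_1^THP(\mathbf{k})V_2=V_2^THP(\mathbf{k})V_1$ for all state vectors $V_1,V_2$ and all $\mathbf{k}\in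 S^2$, i.e. $HP(\mathbf{k})=P(\mathbf{k})^TH$; thus the family $P(\mathbf{k})$ is symmetric hyperbolic.
   Context: Indices $a,b,c,d,f\in\{1,2,3\}$ are raised and lowered with $\delta_{ab}$, repeated indices are summed, $\varepsilon_{abc}$ is the totally antisymmetric symbol with $\varepsilon_{123}=1$, and $K:=\delta^{ab}K_{ab}$. $K_{ab}$ and $N_{ab}$ are arbitrary (not necessarily symmetric) real $3\times3$ matrices. (This symbol corresponds to the Einstein-æther coupling choice $c_1=\Delta s_1^2$, $c_2=\Delta\Gamma$, $c_{13}=0$, $c_{14}=\Delta$.) *)

theory Defs
  imports Main "HOL-Analysis.Analysis"
begin

text \<open>Spatial indices range over {1,2,3}; all index sums are over this set.
  Indices are raised/lowered with the Kronecker delta, so up/down positions coincide.\<close>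

abbreviation idx :: "nat set" where "idx \<equiv> {1..3}"

definition eps :: "nat \<Rightarrow> nat \<Rightarrow> nat \<Rightarrow> real" where
  "eps i j l = (if (i,j,l) \<in> {(1,2,3),(2,3,1),(3,1,2)} then 1
               else if (i,j,l) \<in> {(1,3,2),(3,2,1),(2,1,3)} then -1 else 0)"

definition kdelta :: "nat \<Rightarrow> nat \<Rightarrow> real" where
  "kdelta i j = (if i = j then 1 else 0)"

text \<open>State vector V = (K_ab, N_ab, a_b); only the components with indices in {1,2,3} matter.\<close>
type_synonym state = "(nat \<Rightarrow> nat \<Rightarrow> real) \<times> (nat \<Rightarrow> nat \<Rightarrow> real) \<times> (nat \<Rightarrow> real)"

definition sigma :: "real \<Rightarrow> real \<Rightarrow> real" where
  "sigma D G = 3 * G * (1 + D * G)"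

definition s1den :: "real \<Rightarrow> real \<Rightarrow> real" where
  "s1den D G = 1 + D * G + (1 - D) * (1 + 3 * D * G + 3 * D\<^sup>2 * G\<^sup>2)"

definition s1sq :: "real \<Rightarrow> real \<Rightarrow> real" where
  "s1sq D G = G * (2 + 3 * D * G) / s1den D G"

definition trK :: "(nat \<Rightarrow> nat \<Rightarrow> real) \<Rightarrow> real" where
  "trK K = (\<Sum>c\<in>idx. K c c)"

definition Pmap :: "real \<Rightarrow> real \<Rightarrow> (nat \<Rightarrow> real) \<Rightarrow> state \<Rightarrow> state" where
  "Pmap D G k V = (case V of (K, N, a) \<Rightarrow>
     ((\<lambda>i j. (\<Sum>c\<in>idx. \<Sum>d\<in>idx. eps i c d * k c * N d j) + k i * a j
         - D / (2 + 3 * D * G) * kdelta i j *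
           ((G - sigma D G) * (\<Sum>f\<in>idx. \<Sum>c\<in>idx. \<Sum>d\<in>idx. eps f c d * k f * N c d)
            + (1 + G + D * sigma D G) * (\<Sum>c\<in>idx. k c * a c))),
      (\<lambda>i j. - (\<Sum>c\<in>idx. \<Sum>d\<in>idx. eps i c d * k c * K d j)
         + D * G * (\<Sum>c\<in>idx. eps i j c * k c) * trK K),
      (\<lambda>j. s1sq D G * (\<Sum>i\<in>idx. k i * K i j)
         + (G - s1sq D G * (1 + D * G)) * k j * trK K)))"

definition Hform :: "real \<Rightarrow> real \<Rightarrow> state \<Rightarrow> state \<Rightarrow> real" where
  "Hform D G V W = (case V of (K, N, a) \<Rightarrow> case W of (K', N', a') \<Rightarrow>
     (\<Sum>i\<in>idx. \<Sum>j\<in>idx. K i j * K' i j) + (\<Sum>i\<in>idx. \<Sum>j\<in>idx. N i j * N' i j)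
     + (1 / s1sq D G) * (\<Sum>j\<in>idx. a j * a' j))"

end

theory Submission imports Defs begin

text \<open>With respect to \<open>H\<close>, the curl terms of \<open>P(k)\<close> couple \<open>K\<close> and \<open>N\<close> antisymmetrically
  (so their signs in \<open>\<tilde>K\<close> and \<open>\<tilde>N\<close> make them symmetric), the terms \<open>k\<^sub>a a\<^sub>b\<close> and
  \<open>s\<^sub>1\<^sup>2 k\<^sup>a K\<^sub>a\<^sub>b\<close> balance because of the weight \<open>s\<^sub>1\<^sup>-\<^sup>2\<close> on \<open>a\<close>, and the remaining terms
  all pass through the trace \<open>K\<close>. Hence \<open>H P(k)\<close> is symmetric for every map of this shape
  whose trace couplings satisfy two linear relations, and the Einstein-aether coefficients
  satisfy both relations identically in \<open>\<Delta>, \<Gamma>\<close>.\<close>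

lemma sum_idx_expand: "(\<Sum>i\<in>idx. f i) = f 1 + f 2 + (f 3 :: real)"
proof -
  have "idx = {1, 2, 3}" by auto
  then show ?thesis by simp
qed

definition frob :: "(nat \<Rightarrow> nat \<Rightarrow> real) \<Rightarrow> (nat \<Rightarrow> nat \<Rightarrow> real) \<Rightarrow> real" where
  "frob K L = (\<Sum>i\<in>idx. \<Sum>j\<in>idx. K i j * L i j)"

definition curl :: "(nat \<Rightarrow> real) \<Rightarrow> (nat \<Rightarrow> nat \<Rightarrow> real) \<Rightarrow> nat \<Rightarrow> nat \<Rightarrow> real" where
  "curl k N i j = (\<Sum>c\<in>idx. \<Sum>d\<in>idx. eps i c d * k c * N d j)"

definition axial :: "(nat \<Rightarrow> real) \<Rightarrow> (nat \<Rightarrow> nat \<Rightarrow> real) \<Rightarrow> real" where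
  "axial k N = (\<Sum>f\<in>idx. \<Sum>c\<in>idx. \<Sum>d\<in>idx. eps f c d * k f * N c d)"

definition dot :: "(nat \<Rightarrow> real) \<Rightarrow> (nat \<Rightarrow> real) \<Rightarrow> real" where
  "dot a b = (\<Sum>j\<in>idx. a j * b j)"

lemma frob_add: "frob K (\<lambda>i j. L i j + M i j) = frob K L + frob K M"
  unfolding frob_def by (simp add: distrib_left sum.distrib)

lemma frob_diff: "frob K (\<lambda>i j. L i j - M i j) = frob K L - frob K M"
  unfolding frob_def by (simp add: right_diff_distrib sum_subtractf)

lemma frob_uminus: "frob K (\<lambda>i j. - L i j) = - frob K L"
  unfolding frob_def by (simp add: sum_negf)

lemma dot_add_scale:
  "dot a (\<lambda>j. s * b j + E * k j * x) = s * dot a b + E * dot k a * x"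
  unfolding dot_def by (simp add: sum.distrib sum_distrib_left sum_distrib_right algebra_simps)

lemma frob_curl_antisym: "frob K (curl k N) = - frob N (curl k K)"
  unfolding frob_def curl_def by (simp only: sum_idx_expand) (simp add: eps_def algebra_simps)

lemma frob_eps: "frob N (\<lambda>i j. u * (\<Sum>c\<in>idx. eps i j c * k c) * x) = u * axial k N * x"
  unfolding frob_def axial_def by (simp only: sum_idx_expand) (simp add: eps_def algebra_simps)

lemma frob_kdelta: "frob K (\<lambda>i j. u * kdelta i j * x) = u * trK K * x"
  unfolding frob_def trK_def by (simp only: sum_idx_expand) (simp add: kdelta_def algebra_simps)

lemma frob_dyad: "frob K (\<lambda>i j. k i * a j) = dot a (\<lambda>j. \<Sum>i\<in>idx. k i * K i j)"
  unfolding frob_def dot_def by (simp only: sum_idx_expand) (simp add: algebra_simps)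

definition Hweighted :: "real \<Rightarrow> state \<Rightarrow> state \<Rightarrow> real" where
  "Hweighted s V W = (case V of (K, N, a) \<Rightarrow> case W of (K', N', a') \<Rightarrow>
     frob K K' + frob N N' + dot a a' / s)"

definition Pfamily :: "real \<Rightarrow> real \<Rightarrow> real \<Rightarrow> real \<Rightarrow> real \<Rightarrow> real \<Rightarrow>
    (nat \<Rightarrow> real) \<Rightarrow> state \<Rightarrow> state" where
  "Pfamily u p q B s E k V = (case V of (K, N, a) \<Rightarrow>
     ((\<lambda>i j. curl k N i j + k i * a j - u * kdelta i j * (p * axial k N + q * dot k a)),
      (\<lambda>i j. - curl k K i j + B * (\<Sum>c\<in>idx. eps i j c * k c) * trK K),
      (\<lambda>j. s * (\<Sum>i\<in>idx. k i * K i j) + E * k j * trK K)))"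

lemma Hweighted_Pfamily:
  assumes "s \<noteq> 0"
  shows "Hweighted s (K, N, a) (Pfamily u p q B s E k (K', N', a')) =
    frob K (curl k N') - frob N (curl k K') + dot a (\<lambda>j. \<Sum>i\<in>idx. k i * K' i j)
    + dot a' (\<lambda>j. \<Sum>i\<in>idx. k i * K i j)
    - u * trK K * (p * axial k N' + q * dot k a') + trK K' * (B * axial k N + E / s * dot k a)"
  using assms unfolding Hweighted_def Pfamily_def
  by (simp only: prod.case frob_add frob_diff frob_uminus frob_dyad frob_eps frob_kdelta
      dot_add_scale) (simp add: field_simps)

lemma Hweighted_Pfamily_symmetric:
  assumes "s \<noteq> 0" and "B = - (u * p)" and "E = - (s * (u * q))"
  shows "Hweighted s V (Pfamily u p q B s E k W) = Hweighted s W (Pfamily u p q B s E k V)"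
proof -
  obtain K N a where V: "V = (K, N, a)" by (cases V) auto
  obtain K' N' a' where W: "W = (K', N', a')" by (cases W) auto
  show ?thesis
    using assms unfolding V W Hweighted_Pfamily[OF assms(1)]
    by (simp add: frob_curl_antisym[of K k N'] frob_curl_antisym[of K' k N] algebra_simps)
qed

lemma Pmap_eq_Pfamily:
  "Pmap D G k = Pfamily (D / (2 + 3 * D * G)) (G - sigma D G) (1 + G + D * sigma D G) (D * G)
    (s1sq D G) (G - s1sq D G * (1 + D * G)) k"
  unfolding Pmap_def Pfamily_def curl_def axial_def dot_def by (intro ext) simp

lemma Hform_eq_Hweighted: "Hform D G = Hweighted (s1sq D G)"
  unfolding Hform_def Hweighted_def frob_def dot_def by (intro ext) simp

lemma aether_KN_trace_coupling:
  assumes "2 + 3 * D * G \<noteq> 0"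
  shows "D / (2 + 3 * D * G) * (G - sigma D G) = - (D * G)"
  using assms unfolding sigma_def by (simp add: field_simps)

lemma aether_Ka_trace_coupling:
  assumes "2 + 3 * D * G \<noteq> 0" and "s1den D G \<noteq> 0"
  shows "G - s1sq D G * (1 + D * G) = - (s1sq D G * (D / (2 + 3 * D * G) * (1 + G + D * sigma D G)))"
proof -
  have numerator: "s1den D G - (2 + 3 * D * G) * (1 + D * G) = - D * (1 + G + D * sigma D G)"
    by (simp add: s1den_def sigma_def power2_eq_square algebra_simps)
  have "G - s1sq D G * (1 + D * G) = G * (s1den D G - (2 + 3 * D * G) * (1 + D * G)) / s1den D G"
    using assms unfolding s1sq_def by (simp add: field_simps)
  also have "\<dots> = - (s1sq D G * (D / (2 + 3 * D * G) * (1 + G + D * sigma D G)))"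
  proof -
    have "s1den D G * (2 + 3 * D * G) \<noteq> 0" using assms by simp
    then show ?thesis using assms unfolding numerator s1sq_def by (simp add: field_simps)
  qed
  finally show ?thesis .
qed

theorem mainTheorem4:
  fixes D G :: real and k :: "nat \<Rightarrow> real" and V1 V2 :: state
  assumes "2 + 3 * D * G \<noteq> 0"
    and "s1den D G \<noteq> 0"
    and "s1sq D G > 0"
    and "(\<Sum>i\<in>{1..3::nat}. (k i)\<^sup>2) = 1"
  shows "Hform D G V1 (Pmap D G k V2) = Hform D G V2 (Pmap D G k V1)"
  unfolding Hform_eq_Hweighted Pmap_eq_Pfamily
  using assms(3) aether_KN_trace_coupling[OF assms(1)] aether_Ka_trace_coupling[OF assms(1,2)]
  by (intro Hweighted_Pfamily_symmetric) auto

end
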